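(* Let $S=\{s_1<\dots<s_{k_1}\}$ and $T=\{t_1<\dots<t_{k_2}\}$ be nonempty subsets of $\{1,\dots,n-1\}$ with $\max S+\min T\le n$ and $\min S+\max T\le n$, and let $D$ be the digraph of $T_n\langle S;T\rangle$. Let $v$ be a vertex of $D$ and let $a_2,\dots,a_{k_1},b_2,\dots,b_{k_2}$ be nonnegative integers. Then: (a) there is a directed walk $W$ in $D$ starting from $v$, of length $\ell$, containing exactly $a_i$ $s_i$-arcs and exactly $b_j$ $t_j$-arcs for each $2\le i\le k_1$ and $2\le j\le k_2$, where $$\ell\le\Big(\sum_{i=2}^{k_1}a_i+\sum_{j=2}^{k_2}b_j\Big)\Big(\max\Big\{\Big\lceil\tfrac{t_{k_2}}{s_1}\Big\rceil,\Big\lceil\tfrac{s_{k_1}}{t_1}\Big\rceil\Big\}+1\Big);$$ (b) for such a walk $W$, let $a_1$ and $b_1$ be the numbers of $s_1$-arcs and $t_1$-arcs in $W$. If integers $a\ge a_1$ and $b\ge b_1$ satisfy $$1\le v+as_1+\sum_{i=2}^{k_1}a_is_i-bt_1-\sum_{j=2}^{k_2}b_jt_j\le n,$$ then there is a directed walk in $D$ starting from $v$ containing exactly $a$ $s_1$-arcs, exactly $b$ $t_1$-arcs, and exactly $a_i$ $s_i$-arcs and $b_j$ $t_j$-arcs for all $2\le i\le k_1$, $2\le j\le k_2$.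
   Context: $T_n\langle S;T\rangle$ is the $n\times n$ $(0,1)$-matrix whose $(i,j)$-entry is $1$ iff $j-i\in S$ or $i-j\in T$; its digraph $D$ has vertex set $[n]$ and arc $(i,j)$ iff that entry is $1$. An arc $u\to v$ of $D$ is an $s_i$-arc if $v-u=s_i$, and a $t_j$-arc if $u-v=t_j$. *)

theory Defs
  imports Complex_Main
begin

definition is_arc :: "nat \<Rightarrow> nat set \<Rightarrow> nat set \<Rightarrow> int \<Rightarrow> int \<Rightarrow> bool" where
  "is_arc n S T i j \<longleftrightarrow> i \<in> {1..int n} \<and> j \<in> {1..int n} \<and>
      (j - i \<in> int ` S \<or> i - j \<in> int ` T)"

definition is_walk :: "nat \<Rightarrow> nat set \<Rightarrow> nat set \<Rightarrow> int \<Rightarrow> int list \<Rightarrow> bool" where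
  "is_walk n S T v W \<longleftrightarrow> W \<noteq> [] \<and> hd W = v \<and> v \<in> {1..int n} \<and>
      (\<forall>k. Suc k < length W \<longrightarrow> is_arc n S T (W ! k) (W ! Suc k))"

definition walk_len :: "int list \<Rightarrow> nat" where
  "walk_len W = length W - 1"

definition num_s_arcs :: "int list \<Rightarrow> nat \<Rightarrow> nat" where
  "num_s_arcs W s = card {k. Suc k < length W \<and> W ! Suc k - W ! k = int s}"

definition num_t_arcs :: "int list \<Rightarrow> nat \<Rightarrow> nat" where
  "num_t_arcs W t = card {k. Suc k < length W \<and> W ! k - W ! Suc k = int t}"

end

theory Submission
  imports Defs
begin

text \<open>
  (a) The prescribed arcs are realised one at a time. Before an \<open>s\<close>-arc, descend by
  \<open>t\<^sub>1\<close>-arcs into \<open>[1, n - s]\<close>; this window has length at least \<open>t\<^sub>1\<close> because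
  \<open>s + t\<^sub>1 \<le> n\<close>, so at most \<open>\<lceil>s / t\<^sub>1\<rceil>\<close> descending arcs are needed. Symmetrically, before a
  \<open>t\<close>-arc ascend by \<open>s\<^sub>1\<close>-arcs into \<open>[t + 1, n]\<close>. Each prescribed arc thus costs at most
  \<open>c + 1\<close> arcs, where \<open>c\<close> is the larger of the two ceilings in the bound.

  (b) Extend \<open>W\<close> greedily by the missing \<open>s\<^sub>1\<close>- and \<open>t\<^sub>1\<close>-arcs: take an \<open>s\<^sub>1\<close>-arc
  whenever one is still owed and stays below \<open>n\<close>, otherwise a \<open>t\<^sub>1\<close>-arc. Since
  \<open>s\<^sub>1 + t\<^sub>1 \<le> n\<close> and the final vertex lies in \<open>[1, n]\<close>, the walk never leaves \<open>[1, n]\<close>.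
\<close>

definition step_set :: "nat set \<Rightarrow> nat set \<Rightarrow> int set" where
  "step_set S T = int ` S \<union> uminus ` int ` T"

fun walk_of :: "int \<Rightarrow> int list \<Rightarrow> int list" where
  "walk_of u [] = [u]"
| "walk_of u (d # ds) = u # walk_of (u + d) ds"

definition valid_steps :: "nat \<Rightarrow> nat set \<Rightarrow> nat set \<Rightarrow> int \<Rightarrow> int list \<Rightarrow> bool" where
  "valid_steps n S T u ds \<longleftrightarrow> set ds \<subseteq> step_set S T \<and> set (walk_of u ds) \<subseteq> {1..int n}"

lemma valid_steps_simps [simp]:
  "valid_steps n S T u [] \<longleftrightarrow> u \<in> {1..int n}"
  "valid_steps n S T u (d # ds) \<longleftrightarrow>
     u \<in> {1..int n} \<and> d \<in> step_set S T \<and> valid_steps n S T (u + d) ds"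
  by (auto simp: valid_steps_def)

lemma valid_steps_start: "valid_steps n S T u ds \<Longrightarrow> u \<in> {1..int n}"
  by (cases ds) auto

lemma walk_of_ne [simp]: "walk_of u ds \<noteq> []"
  by (cases ds) auto

lemma hd_walk_of [simp]: "hd (walk_of u ds) = u"
  by (cases ds) auto

lemma length_walk_of [simp]: "length (walk_of u ds) = Suc (length ds)"
  by (induction ds arbitrary: u) auto

lemma walk_len_walk_of [simp]: "walk_len (walk_of u ds) = length ds"
  by (simp add: walk_len_def)

lemma nth_walk_of_0 [simp]: "walk_of u ds ! 0 = u"
  by (cases ds) auto

lemma walk_of_nth_step: "k < length ds \<Longrightarrow> walk_of u ds ! Suc k - walk_of u ds ! k = ds ! k"
  by (induction ds arbitrary: u k) (auto simp: nth_Cons split: nat.splits)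

lemma is_arc_iff_step:
  "is_arc n S T u w \<longleftrightarrow> u \<in> {1..int n} \<and> w \<in> {1..int n} \<and> w - u \<in> step_set S T"
proof -
  have "w - u \<in> uminus ` int ` T \<longleftrightarrow> u - w \<in> int ` T"
    by (metis add.inverse_inverse image_eqI imageE minus_diff_eq)
  then show ?thesis
    by (auto simp: is_arc_def step_set_def)
qed

lemma is_walk_singleton: "is_walk n S T u [u] \<longleftrightarrow> u \<in> {1..int n}"
  by (simp add: is_walk_def)

lemma is_walk_Cons:
  assumes "W \<noteq> []"
  shows "is_walk n S T u (u # W) \<longleftrightarrow> is_arc n S T u (hd W) \<and> is_walk n S T (hd W) W"
proof -
  obtain w W' where W: "W = w # W'"
    using assms by (cases W) auto
  have "(\<forall>k. Suc k < length (u # W) \<longrightarrow> is_arc n S T ((u # W) ! k) ((u # W) ! Suc k)) \<longleftrightarrow>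
        is_arc n S T u w \<and> (\<forall>k. Suc k < length W \<longrightarrow> is_arc n S T (W ! k) (W ! Suc k))"
    unfolding W by (auto simp: less_Suc_eq_0_disj)
  then show ?thesis
    by (auto simp: is_walk_def W is_arc_def)
qed

lemma is_walk_walk_of: "valid_steps n S T u ds \<Longrightarrow> is_walk n S T u (walk_of u ds)"
  by (induction ds arbitrary: u)
    (auto simp: is_walk_singleton is_walk_Cons is_arc_iff_step dest: valid_steps_start)

lemma is_walk_iff_valid_steps:
  "is_walk n S T u W \<longleftrightarrow> (\<exists>ds. valid_steps n S T u ds \<and> W = walk_of u ds)"
proof
  show "is_walk n S T u W \<Longrightarrow> \<exists>ds. valid_steps n S T u ds \<and> W = walk_of u ds"
  proof (induction W arbitrary: u)
    case Nil
    then show ?case by (simp add: is_walk_def)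
  next
    case (Cons w W)
    then have "w = u"
      by (simp add: is_walk_def)
    show ?case
    proof (cases "W = []")
      case True
      then show ?thesis
        using Cons.prems \<open>w = u\<close> by (intro exI[of _ "[]"]) (simp add: is_walk_def)
    next
      case False
      then have "is_arc n S T u (hd W)" "is_walk n S T (hd W) W"
        using Cons.prems is_walk_Cons \<open>w = u\<close> by blast+
      moreover obtain ds where "valid_steps n S T (hd W) ds" "W = walk_of (hd W) ds"
        using Cons.IH \<open>is_walk n S T (hd W) W\<close> by blast
      ultimately show ?thesis
        using \<open>w = u\<close> by (intro exI[of _ "(hd W - u) # ds"]) (auto simp: is_arc_iff_step)
    qed
  qed
  show "\<exists>ds. valid_steps n S T u ds \<and> W = walk_of u ds \<Longrightarrow> is_walk n S T u W"
    using is_walk_walk_of by blast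
qed

lemma num_s_arcs_walk_of: "num_s_arcs (walk_of u ds) s = count_list ds (int s)"
proof -
  have "{k. Suc k < length (walk_of u ds) \<and> walk_of u ds ! Suc k - walk_of u ds ! k = int s} =
        {k. k < length ds \<and> ds ! k = int s}"
    using walk_of_nth_step by auto
  then show ?thesis
    by (simp add: num_s_arcs_def count_list_eq_length_filter length_filter_conv_card eq_commute)
qed

lemma num_t_arcs_walk_of: "num_t_arcs (walk_of u ds) t = count_list ds (- int t)"
proof -
  have "walk_of u ds ! k - walk_of u ds ! Suc k = - ds ! k" if "k < length ds" for k
    using walk_of_nth_step[OF that] by (metis minus_diff_eq)
  then have "{k. Suc k < length (walk_of u ds) \<and> walk_of u ds ! k - walk_of u ds ! Suc k = int t} =
        {k. k < length ds \<and> ds ! k = - int t}"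
    by auto
  then show ?thesis
    by (simp add: num_t_arcs_def count_list_eq_length_filter length_filter_conv_card eq_commute)
qed

lemma valid_steps_append:
  "valid_steps n S T u (ds @ es) \<longleftrightarrow> valid_steps n S T u ds \<and> valid_steps n S T (u + sum_list ds) es"
  by (induction ds arbitrary: u) (auto simp: add.assoc dest: valid_steps_start)

lemma valid_steps_end: "valid_steps n S T u ds \<Longrightarrow> u + sum_list ds \<in> {1..int n}"
  using valid_steps_append[of n S T u ds "[]"] by simp

lemma count_list_replicate [simp]: "count_list (replicate m y) x = (if y = x then m else 0)"
  by (induction m) auto

lemma valid_steps_replicate:
  assumes "d \<in> step_set S T"
  shows "u \<in> {1..int n} \<Longrightarrow> u + int m * d \<in> {1..int n} \<Longrightarrow> valid_steps n S T u (replicate m d)"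
proof (induction m arbitrary: u)
  case (Suc m)
  have last: "1 \<le> (u + d) + int m * d" "(u + d) + int m * d \<le> int n"
    using Suc.prems(2) by (simp_all add: algebra_simps)
  have "u + d \<in> {1..int n}"
  proof (cases "0 \<le> d")
    case True
    then have "0 \<le> int m * d" by simp
    then show ?thesis using True last Suc.prems(1) unfolding atLeastAtMost_iff by linarith
  next
    case False
    then have "int m * d \<le> 0" by (simp add: mult_nonneg_nonpos)
    then show ?thesis using False last Suc.prems(1) unfolding atLeastAtMost_iff by linarith
  qed
  then show ?case
    using Suc assms by (simp add: algebra_simps)
qed simp

lemma sum_list_eq_sum_count_list:
  fixes ds :: "'a::comm_ring_1 list"
  assumes "finite X"
  shows "set ds \<subseteq> X \<Longrightarrow> sum_list ds = (\<Sum>x\<in>X. of_nat (count_list ds x) * x)"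
proof (induction ds)
  case (Cons d ds)
  have "(\<Sum>x\<in>X. of_nat (count_list (d # ds) x) * x) =
        (\<Sum>x\<in>X. of_nat (count_list ds x) * x + (if d = x then x else 0))"
    by (intro sum.cong) (auto simp: distrib_right)
  then show ?case
    using Cons assms by (simp add: sum.distrib)
qed simp

lemma sum_list_steps:
  assumes "finite S" "finite T" "set ds \<subseteq> step_set S T"
  shows "sum_list ds = (\<Sum>s\<in>S. int (count_list ds (int s)) * int s)
                      - (\<Sum>t\<in>T. int (count_list ds (- int t)) * int t)"
proof -
  let ?w = "\<lambda>x. int (count_list ds x) * x"
  have "sum_list ds = sum ?w (int ` S \<union> uminus ` int ` T)"
    using sum_list_eq_sum_count_list[of "step_set S T" ds] assms by (simp add: step_set_def)
  also have "\<dots> = sum ?w (int ` S) + sum ?w (uminus ` int ` T)"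
    using assms by (intro sum.union_inter_neutral) auto
  also have "\<dots> = (\<Sum>s\<in>S. ?w (int s)) + (\<Sum>t\<in>T. ?w (- int t))"
    by (simp add: sum.reindex inj_on_def image_image)
  finally show ?thesis
    by (simp add: sum_negf)
qed

lemma exists_multiple_in_window:
  fixes u lo hi d :: int
  assumes "0 < d" "u \<le> hi" "lo + d \<le> hi + 1"
  shows "\<exists>m::nat. lo \<le> u + int m * d \<and> u + int m * d \<le> hi \<and> int m * d < max (lo - u) 0 + d"
proof (cases "lo \<le> u")
  case True
  then show ?thesis
    using assms by (intro exI[of _ 0]) auto
next
  case False
  define q where "q = (lo - u - 1) div d"
  define r where "r = (lo - u - 1) mod d"
  have qr: "lo - u - 1 = q * d + r" "0 \<le> r" "r < d"
    using assms(1) by (simp_all add: q_def r_def)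
  have "0 \<le> q"
    using False assms(1) by (simp add: q_def pos_imp_zdiv_nonneg_iff)
  then have "int (nat (q + 1)) * d = q * d + d"
    by (simp add: algebra_simps)
  then show ?thesis
    using qr assms False by (intro exI[of _ "nat (q + 1)"]) auto
qed

lemma exists_detour_up:
  assumes "s \<in> S" "t \<in> T" "0 < t" "s + t \<le> n" "u \<in> {1..int n}"
  shows "\<exists>m. m * t < s + t \<and> valid_steps n S T u (replicate m (- int t) @ [int s])"
proof -
  obtain m :: nat where m: "int s - int n \<le> - u + int m * int t" "- u + int m * int t \<le> - 1"
      "int m * int t < max (int s - int n + u) 0 + int t"
    using exists_multiple_in_window[of "int t" "- u" "- 1" "int s - int n"] assms by auto
  have "valid_steps n S T u (replicate m (- int t))"
    using m assms by (intro valid_steps_replicate) (auto simp: step_set_def)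
  moreover have "valid_steps n S T (u - int m * int t) [int s]"
    using m assms by (auto simp: step_set_def)
  moreover have "m * t < s + t"
    using m(3) assms(5) by (simp flip: of_nat_mult) linarith
  ultimately show ?thesis
    by (intro exI[of _ m]) (simp add: valid_steps_append sum_list_replicate)
qed

lemma exists_detour_down:
  assumes "t \<in> T" "s \<in> S" "0 < s" "s + t \<le> n" "u \<in> {1..int n}"
  shows "\<exists>m. m * s < t + s \<and> valid_steps n S T u (replicate m (int s) @ [- int t])"
proof -
  obtain m :: nat where m: "int t + 1 \<le> u + int m * int s" "u + int m * int s \<le> int n"
      "int m * int s < max (int t + 1 - u) 0 + int s"
    using exists_multiple_in_window[of "int s" u "int n" "int t + 1"] assms by auto
  have "valid_steps n S T u (replicate m (int s))"
    using m assms by (intro valid_steps_replicate) (auto simp: step_set_def)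
  moreover have "valid_steps n S T (u + int m * int s) [- int t]"
    using m assms by (auto simp: step_set_def)
  moreover have "m * s < t + s"
    using m(3) assms(5) by (simp flip: of_nat_mult) linarith
  ultimately show ?thesis
    by (intro exI[of _ m]) (simp add: valid_steps_append sum_list_replicate)
qed

lemma exists_detour:
  assumes "s1 \<in> S" "0 < s1" "t1 \<in> T" "0 < t1"
    and S_bound: "\<forall>s\<in>S. s + t1 \<le> n \<and> s \<le> c * t1"
    and T_bound: "\<forall>t\<in>T. s1 + t \<le> n \<and> t \<le> c * s1"
    and "r \<in> step_set S T" "u \<in> {1..int n}"
  shows "\<exists>m e. m \<le> c \<and> e \<in> {int s1, - int t1} \<and> valid_steps n S T u (replicate m e @ [r])"
proof -
  consider s where "s \<in> S" "r = int s" | t where "t \<in> T" "r = - int t"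
    using assms(7) by (auto simp: step_set_def)
  then show ?thesis
  proof cases
    case (1 s)
    then obtain m where m: "m * t1 < s + t1" "valid_steps n S T u (replicate m (- int t1) @ [r])"
      using exists_detour_up[of s S t1 T n u] assms by auto
    moreover have "s \<le> c * t1"
      using S_bound \<open>s \<in> S\<close> by blast
    ultimately have "m * t1 < (c + 1) * t1"
      by simp
    then have "m < c + 1"
      by (rule mult_right_less_imp_less) simp
    then show ?thesis
      using m(2) by (intro exI[of _ m] exI[of _ "- int t1"]) simp
  next
    case (2 t)
    then obtain m where m: "m * s1 < t + s1" "valid_steps n S T u (replicate m (int s1) @ [r])"
      using exists_detour_down[of t T s1 S n u] assms by (auto simp: add.commute)
    moreover have "t \<le> c * s1"
      using T_bound \<open>t \<in> T\<close> by blast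
    ultimately have "m * s1 < (c + 1) * s1"
      by simp
    then have "m < c + 1"
      by (rule mult_right_less_imp_less) simp
    then show ?thesis
      using m(2) by (intro exI[of _ m] exI[of _ "int s1"]) simp
  qed
qed

lemma exists_steps_realizing:
  assumes "s1 \<in> S" "0 < s1" "t1 \<in> T" "0 < t1"
    and "\<forall>s\<in>S. s + t1 \<le> n \<and> s \<le> c * t1"
    and "\<forall>t\<in>T. s1 + t \<le> n \<and> t \<le> c * s1"
  shows "set R \<subseteq> step_set S T \<Longrightarrow> u \<in> {1..int n} \<Longrightarrow>
    \<exists>ds. valid_steps n S T u ds \<and> length ds \<le> length R * (c + 1) \<and>
      (\<forall>x. x \<noteq> int s1 \<longrightarrow> x \<noteq> - int t1 \<longrightarrow> count_list ds x = count_list R x)"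
proof (induction R arbitrary: u)
  case (Cons r R)
  obtain m e where me: "m \<le> c" "e \<in> {int s1, - int t1}" "valid_steps n S T u (replicate m e @ [r])"
    using exists_detour[OF assms, of r u] Cons.prems by auto
  define u' where "u' = u + sum_list (replicate m e @ [r])"
  obtain ds where ds: "valid_steps n S T u' ds" "length ds \<le> length R * (c + 1)"
      "\<forall>x. x \<noteq> int s1 \<longrightarrow> x \<noteq> - int t1 \<longrightarrow> count_list ds x = count_list R x"
    using Cons.IH[of u'] Cons.prems(1) valid_steps_end[OF me(3)] unfolding u'_def by auto
  have "valid_steps n S T u ((replicate m e @ [r]) @ ds)"
    using me(3) ds(1) unfolding valid_steps_append u'_def by simp
  then show ?case
    using me ds(2,3) by (intro exI[of _ "replicate m e @ r # ds"]) auto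
qed simp

lemma down_step_when_up_step_blocked:
  fixes u :: int and s t n x y :: nat
  assumes "0 < t" "s + t \<le> n" "1 \<le> u" "0 < x + y"
    and "u + int x * int s - int y * int t \<in> {1..int n}"
    and "\<not> (0 < x \<and> u + int s \<le> int n)"
  shows "0 < y \<and> 1 \<le> u - int t"
proof (cases "x = 0")
  case True
  then have "0 < y"
    using assms(4) by simp
  then have "int t \<le> int y * int t"
    by (cases y) (simp_all add: algebra_simps)
  then show ?thesis
    using assms(5) True \<open>0 < y\<close> by simp
next
  case False
  \<comment> \<open>the owed \<open>s\<close>-arc does not fit, so \<open>u > n - s \<ge> t\<close>\<close>
  then have "int s \<le> int x * int s"
    by (cases x) (simp_all add: algebra_simps)
  then have "y \<noteq> 0"
    using assms(5,6) False by (cases "y = 0") auto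
  then show ?thesis
    using assms(2,6) False by simp
qed

lemma exists_steps_with_counts:
  assumes "s \<in> S" "t \<in> T" "0 < s" "0 < t" "s + t \<le> n"
  shows "u \<in> {1..int n} \<Longrightarrow> u + int x * int s - int y * int t \<in> {1..int n} \<Longrightarrow>
    \<exists>ds. valid_steps n S T u ds \<and> set ds \<subseteq> {int s, - int t} \<and>
      count_list ds (int s) = x \<and> count_list ds (- int t) = y"
proof (induction "x + y" arbitrary: u x y)
  case 0
  then show ?case
    by (intro exI[of _ "[]"]) auto
next
  case (Suc k)
  have steps: "int s \<in> step_set S T" "- int t \<in> step_set S T" "int s \<noteq> - int t"
    using assms by (auto simp: step_set_def)
  show ?case
  proof (cases "0 < x \<and> u + int s \<le> int n")
    case True
    then obtain x' where "x = Suc x'"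
      using gr0_implies_Suc by blast
    moreover obtain ds where "valid_steps n S T (u + int s) ds" "set ds \<subseteq> {int s, - int t}"
        "count_list ds (int s) = x'" "count_list ds (- int t) = y"
      using Suc.hyps(1)[of x' y "u + int s"] Suc.hyps(2) Suc.prems True assms(3) \<open>x = Suc x'\<close>
      by (auto simp: algebra_simps)
    ultimately show ?thesis
      using Suc.prems(1) steps by (intro exI[of _ "int s # ds"]) auto
  next
    case False
    moreover have "0 < x + y"
      using Suc.hyps(2) by linarith
    ultimately have "0 < y \<and> 1 \<le> u - int t"
      using down_step_when_up_step_blocked[of t s n u x y] assms Suc.prems by simp
    then obtain y' where "y = Suc y'" "1 \<le> u - int t"
      using gr0_implies_Suc by blast
    moreover obtain ds where "valid_steps n S T (u - int t) ds" "set ds \<subseteq> {int s, - int t}"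
        "count_list ds (int s) = x" "count_list ds (- int t) = y'"
      using Suc.hyps(1)[of x y' "u - int t"] Suc.hyps(2) Suc.prems \<open>y = Suc y'\<close> \<open>1 \<le> u - int t\<close>
      by (auto simp: algebra_simps)
    ultimately show ?thesis
      using Suc.prems(1) steps by (intro exI[of _ "- int t # ds"]) auto
  qed
qed

lemma exists_steps_extension:
  assumes "s \<in> S" "t \<in> T" "0 < s" "0 < t" "s + t \<le> n" "valid_steps n S T u ds"
    and "count_list ds (int s) \<le> x" "count_list ds (- int t) \<le> y"
    and "u + sum_list ds + int (x - count_list ds (int s)) * int s
           - int (y - count_list ds (- int t)) * int t \<in> {1..int n}"
  shows "\<exists>ds'. valid_steps n S T u ds' \<and> count_list ds' (int s) = x \<and> count_list ds' (- int t) = y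
    \<and> (\<forall>z. z \<noteq> int s \<longrightarrow> z \<noteq> - int t \<longrightarrow> count_list ds' z = count_list ds z)"
proof -
  obtain tail where tail: "valid_steps n S T (u + sum_list ds) tail" "set tail \<subseteq> {int s, - int t}"
      "count_list tail (int s) = x - count_list ds (int s)"
      "count_list tail (- int t) = y - count_list ds (- int t)"
    using exists_steps_with_counts[OF assms(1-5) valid_steps_end[OF assms(6)] assms(9)] by blast
  have "valid_steps n S T u (ds @ tail)"
    using assms(6) tail(1) valid_steps_append by blast
  moreover have "count_list tail z = 0" if "z \<noteq> int s" "z \<noteq> - int t" for z
    using tail(2) that by (auto simp: count_list_0_iff)
  ultimately show ?thesis
    using tail(3,4) assms(7,8) by (intro exI[of _ "ds @ tail"]) auto
qed

lemma exists_list_with_counts: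
  assumes "finite X" "inj_on g X"
  shows "\<exists>R. set R \<subseteq> g ` X \<and> length R = sum f X \<and> (\<forall>x\<in>X. count_list R (g x) = f x)"
  using assms
proof (induction X rule: finite_induct)
  case (insert x X)
  then obtain R where R: "set R \<subseteq> g ` X" "length R = sum f X" "\<forall>y\<in>X. count_list R (g y) = f y"
    by auto
  have "g x \<notin> set R"
    using insert R(1) by auto
  then show ?case
    using insert R by (intro exI[of _ "replicate (f x) (g x) @ R"]) auto
qed simp

lemma le_nat_ceiling_div_mult:
  assumes "0 < d"
  shows "x \<le> nat \<lceil>real x / real d\<rceil> * d"
proof -
  have "real x = real x / real d * real d"
    using assms by simp
  also have "\<dots> \<le> real (nat \<lceil>real x / real d\<rceil>) * real d"
    by (intro mult_right_mono) linarith+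
  also have "\<dots> = real (nat \<lceil>real x / real d\<rceil> * d)"
    by simp
  finally show ?thesis
    by (simp only: of_nat_le_iff)
qed

locale toeplitz_digraph =
  fixes n :: nat and S T :: "nat set"
  assumes S_range: "S \<subseteq> {1..n-1}" and S_nonempty: "S \<noteq> {}"
    and T_range: "T \<subseteq> {1..n-1}" and T_nonempty: "T \<noteq> {}"
    and Max_S_Min_T: "Max S + Min T \<le> n" and Min_S_Max_T: "Min S + Max T \<le> n"
begin

lemma finite_S: "finite S"
  using S_range finite_subset by blast

lemma finite_T: "finite T"
  using T_range finite_subset by blast

lemma Min_S_in: "Min S \<in> S"
  using finite_S S_nonempty by simp

lemma Min_T_in: "Min T \<in> T"
  using finite_T T_nonempty by simp

lemma S_pos: "s \<in> S \<Longrightarrow> 0 < s"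
  using S_range by auto

lemma T_pos: "t \<in> T \<Longrightarrow> 0 < t"
  using T_range by auto

lemma S_add_Min_T: "s \<in> S \<Longrightarrow> s + Min T \<le> n"
  using Max_S_Min_T finite_S Max_ge[of S s] by linarith

lemma Min_S_add_T: "t \<in> T \<Longrightarrow> Min S + t \<le> n"
  using Min_S_Max_T finite_T Max_ge[of T t] by linarith

definition detour_bound :: nat where
  "detour_bound = nat (max \<lceil>real (Max T) / real (Min S)\<rceil> \<lceil>real (Max S) / real (Min T)\<rceil>)"

lemma S_le_detour_bound: "s \<in> S \<Longrightarrow> s \<le> detour_bound * Min T"
proof -
  assume "s \<in> S"
  then have "s \<le> Max S"
    using finite_S by simp
  also have "\<dots> \<le> nat \<lceil>real (Max S) / real (Min T)\<rceil> * Min T"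
    using Min_T_in T_pos by (intro le_nat_ceiling_div_mult) simp
  also have "\<dots> \<le> detour_bound * Min T"
    unfolding detour_bound_def by (intro mult_right_mono) linarith+
  finally show ?thesis .
qed

lemma T_le_detour_bound: "t \<in> T \<Longrightarrow> t \<le> detour_bound * Min S"
proof -
  assume "t \<in> T"
  then have "t \<le> Max T"
    using finite_T by simp
  also have "\<dots> \<le> nat \<lceil>real (Max T) / real (Min S)\<rceil> * Min S"
    using Min_S_in S_pos by (intro le_nat_ceiling_div_mult) simp
  also have "\<dots> \<le> detour_bound * Min S"
    unfolding detour_bound_def by (intro mult_right_mono) linarith+
  finally show ?thesis .
qed

lemma exists_list_with_arc_counts:
  "\<exists>R. set R \<subseteq> step_set S T
    \<and> length R = (\<Sum>s\<in>S - {Min S}. a s) + (\<Sum>t\<in>T - {Min T}. b t)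
    \<and> (\<forall>s\<in>S - {Min S}. count_list R (int s) = a s)
    \<and> (\<forall>t\<in>T - {Min T}. count_list R (- int t) = b t)"
proof -
  obtain Rs where Rs: "set Rs \<subseteq> int ` (S - {Min S})" "length Rs = (\<Sum>s\<in>S - {Min S}. a s)"
      "\<forall>s\<in>S - {Min S}. count_list Rs (int s) = a s"
    using exists_list_with_counts[of "S - {Min S}" int a] finite_S by auto
  obtain Rt where Rt: "set Rt \<subseteq> (\<lambda>t. - int t) ` (T - {Min T})" "length Rt = (\<Sum>t\<in>T - {Min T}. b t)"
      "\<forall>t\<in>T - {Min T}. count_list Rt (- int t) = b t"
    using exists_list_with_counts[of "T - {Min T}" "\<lambda>t. - int t" b] finite_T by (auto simp: inj_on_def)
  have "int s \<notin> set Rt" if "s \<in> S" for s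
    using Rt(1) S_pos[OF that] by force
  moreover have "- int t \<notin> set Rs" if "t \<in> T" for t
    using Rs(1) T_pos[OF that] by force
  ultimately show ?thesis
    using Rs Rt by (intro exI[of _ "Rs @ Rt"]) (auto simp: step_set_def)
qed

lemma walk_with_prescribed_arcs:
  assumes "v \<in> {1..int n}"
  shows "\<exists>W. is_walk n S T v W
    \<and> (\<forall>s\<in>S - {Min S}. num_s_arcs W s = a s)
    \<and> (\<forall>t\<in>T - {Min T}. num_t_arcs W t = b t)
    \<and> walk_len W \<le> ((\<Sum>s\<in>S - {Min S}. a s) + (\<Sum>t\<in>T - {Min T}. b t)) *
          (nat (max \<lceil>real (Max T) / real (Min S)\<rceil> \<lceil>real (Max S) / real (Min T)\<rceil>) + 1)"
proof -
  obtain R where R: "set R \<subseteq> step_set S T"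
      "length R = (\<Sum>s\<in>S - {Min S}. a s) + (\<Sum>t\<in>T - {Min T}. b t)"
      "\<forall>s\<in>S - {Min S}. count_list R (int s) = a s" "\<forall>t\<in>T - {Min T}. count_list R (- int t) = b t"
    using exists_list_with_arc_counts by blast
  obtain ds where ds: "valid_steps n S T v ds" "length ds \<le> length R * (detour_bound + 1)"
      "\<forall>x. x \<noteq> int (Min S) \<longrightarrow> x \<noteq> - int (Min T) \<longrightarrow> count_list ds x = count_list R x"
    using exists_steps_realizing[OF Min_S_in S_pos[OF Min_S_in] Min_T_in T_pos[OF Min_T_in] _ _ R(1) assms]
      S_add_Min_T Min_S_add_T S_le_detour_bound T_le_detour_bound by blast
  have "int s \<noteq> int (Min S) \<and> int s \<noteq> - int (Min T)" if "s \<in> S - {Min S}" for s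
    using that S_pos by force
  moreover have "- int t \<noteq> int (Min S) \<and> - int t \<noteq> - int (Min T)" if "t \<in> T - {Min T}" for t
    using that T_pos Min_S_in S_pos by force
  ultimately show ?thesis
    using ds R unfolding detour_bound_def
    by (intro exI[of _ "walk_of v ds"])
      (simp add: is_walk_walk_of num_s_arcs_walk_of num_t_arcs_walk_of)
qed

lemma sum_list_valid_steps:
  assumes "valid_steps n S T v ds"
  shows "sum_list ds = int (count_list ds (int (Min S))) * int (Min S)
      + (\<Sum>s\<in>S - {Min S}. int (count_list ds (int s)) * int s)
      - int (count_list ds (- int (Min T))) * int (Min T)
      - (\<Sum>t\<in>T - {Min T}. int (count_list ds (- int t)) * int t)"
proof -
  have "set ds \<subseteq> step_set S T"
    using assms by (simp add: valid_steps_def)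
  then show ?thesis
    using sum_list_steps[OF finite_S finite_T] finite_S finite_T Min_S_in Min_T_in
    by (simp add: sum.remove)
qed

lemma walk_extension:
  assumes W: "is_walk n S T v W"
    and a: "\<forall>s\<in>S - {Min S}. num_s_arcs W s = a s"
    and b: "\<forall>t\<in>T - {Min T}. num_t_arcs W t = b t"
    and A: "num_s_arcs W (Min S) \<le> A" and B: "num_t_arcs W (Min T) \<le> B"
    and target: "v + int A * int (Min S) + (\<Sum>s\<in>S - {Min S}. int (a s) * int s)
        - int B * int (Min T) - (\<Sum>t\<in>T - {Min T}. int (b t) * int t) \<in> {1..int n}"
  shows "\<exists>W'. is_walk n S T v W'
    \<and> num_s_arcs W' (Min S) = A \<and> num_t_arcs W' (Min T) = B
    \<and> (\<forall>s\<in>S - {Min S}. num_s_arcs W' s = a s)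
    \<and> (\<forall>t\<in>T - {Min T}. num_t_arcs W' t = b t)"
proof -
  obtain ds where ds: "valid_steps n S T v ds" "W = walk_of v ds"
    using W is_walk_iff_valid_steps by blast
  define a1 where "a1 = count_list ds (int (Min S))"
  define b1 where "b1 = count_list ds (- int (Min T))"
  have a': "\<forall>s\<in>S - {Min S}. count_list ds (int s) = a s"
    using a ds(2) by (simp add: num_s_arcs_walk_of)
  have b': "\<forall>t\<in>T - {Min T}. count_list ds (- int t) = b t"
    using b ds(2) by (simp add: num_t_arcs_walk_of)
  have "a1 \<le> A" "b1 \<le> B"
    using A B ds(2) by (simp_all add: a1_def b1_def num_s_arcs_walk_of num_t_arcs_walk_of)
  then have "v + sum_list ds + int (A - a1) * int (Min S) - int (B - b1) * int (Min T) \<in> {1..int n}"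
    using target sum_list_valid_steps[OF ds(1)] a' b'
    by (simp add: a1_def b1_def algebra_simps)
  then obtain ds' where ds': "valid_steps n S T v ds'"
      "count_list ds' (int (Min S)) = A" "count_list ds' (- int (Min T)) = B"
      "\<forall>x. x \<noteq> int (Min S) \<longrightarrow> x \<noteq> - int (Min T) \<longrightarrow> count_list ds' x = count_list ds x"
    using exists_steps_extension[OF Min_S_in Min_T_in S_pos[OF Min_S_in] T_pos[OF Min_T_in]
        S_add_Min_T[OF Min_S_in] ds(1)] \<open>a1 \<le> A\<close> \<open>b1 \<le> B\<close>
    unfolding a1_def b1_def by blast
  have "int s \<noteq> int (Min S) \<and> int s \<noteq> - int (Min T)" if "s \<in> S - {Min S}" for s
    using that S_pos by force
  moreover have "- int t \<noteq> int (Min S) \<and> - int t \<noteq> - int (Min T)" if "t \<in> T - {Min T}" for t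
    using that T_pos Min_S_in S_pos by force
  ultimately show ?thesis
    using ds' a' b'
    by (intro exI[of _ "walk_of v ds'"]) (simp add: is_walk_walk_of num_s_arcs_walk_of num_t_arcs_walk_of)
qed

end

theorem theorem3p3:
  fixes n :: nat and S T :: "nat set" and v :: int and a b :: "nat \<Rightarrow> nat"
  assumes "S \<subseteq> {1..n-1}" and "S \<noteq> {}"
    and "T \<subseteq> {1..n-1}" and "T \<noteq> {}"
    and "Max S + Min T \<le> n" and "Min S + Max T \<le> n"
    and "v \<in> {1..int n}"
  shows
   "(\<exists>W. is_walk n S T v W
        \<and> (\<forall>s\<in>S - {Min S}. num_s_arcs W s = a s)
        \<and> (\<forall>t\<in>T - {Min T}. num_t_arcs W t = b t)
        \<and> walk_len W \<le> ((\<Sum>s\<in>S - {Min S}. a s) + (\<Sum>t\<in>T - {Min T}. b t)) *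
              (nat (max \<lceil>real (Max T) / real (Min S)\<rceil> \<lceil>real (Max S) / real (Min T)\<rceil>) + 1))
    \<and>
    (\<forall>W. (is_walk n S T v W
          \<and> (\<forall>s\<in>S - {Min S}. num_s_arcs W s = a s)
          \<and> (\<forall>t\<in>T - {Min T}. num_t_arcs W t = b t)
          \<and> walk_len W \<le> ((\<Sum>s\<in>S - {Min S}. a s) + (\<Sum>t\<in>T - {Min T}. b t)) *
              (nat (max \<lceil>real (Max T) / real (Min S)\<rceil> \<lceil>real (Max S) / real (Min T)\<rceil>) + 1))
      \<longrightarrow> (\<forall>A B :: nat. num_s_arcs W (Min S) \<le> A \<and> num_t_arcs W (Min T) \<le> B
            \<and> 1 \<le> v + int A * int (Min S) + (\<Sum>s\<in>S - {Min S}. int (a s) * int s)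
                   - int B * int (Min T) - (\<Sum>t\<in>T - {Min T}. int (b t) * int t)
            \<and> v + int A * int (Min S) + (\<Sum>s\<in>S - {Min S}. int (a s) * int s)
                   - int B * int (Min T) - (\<Sum>t\<in>T - {Min T}. int (b t) * int t) \<le> int n
          \<longrightarrow> (\<exists>W'. is_walk n S T v W'
                \<and> num_s_arcs W' (Min S) = A \<and> num_t_arcs W' (Min T) = B
                \<and> (\<forall>s\<in>S - {Min S}. num_s_arcs W' s = a s)
                \<and> (\<forall>t\<in>T - {Min T}. num_t_arcs W' t = b t))))"
proof -
  interpret toeplitz_digraph n S T
    using assms(1-6) by unfold_locales
  show ?thesis
    using walk_with_prescribed_arcs[OF assms(7)] walk_extension by auto
qed

end
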